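(* Let $f\in\mathbb{C}[h]$, $\lambda\in S_f$ with $|\lambda|=m\neq 0$, $\dot z\in\mathbb{C}$ and $a\in\mathbb{C}^*$. Then the $m$-dimensional $\mathcal{H}(f)$-modules $A'_{\mathcal{H}(f)}(\lambda,\dot z,a)$ and $B'_{\mathcal{H}(f)}(\lambda,\dot z,a)$ are simple.
   Context: For $f(h)\in\mathbb{C}[h]$, $\mathcal{H}(f)$ is the unital associative $\mathbb{C}$-algebra generated by $x,y,h$ with relations $hx=xf(h)$, $yh=f(h)y$, $yx-xy=f(h)-h$. $S_f$ is the set of maps $\lambda:\mathbb{Z}\to\mathbb{C}$ with $f(\lambda(i))=\lambda(i+1)$ for all $i$; $|\lambda|$ is the nonnegative generator of the subgroup $\{m\in\mathbb{Z}\mid\lambda(i+m)=\lambda(i)\ \forall i\}$. For $\lambda\in S_f$, $\dot z\in\mathbb{C}$: $A_{\mathcal{H}(f)}(\lambda,\dot z)$ is $\mathbb{C}[t,t^{-1}]$ with $ht^i=\lambda(i)t^i$, $xt^i=t^{i+1}$, $yt^i=(\lambda(i)+\dot z)t^{i-1}$; $B_{\mathcal{H}(f)}(\lambda,\dot z)$ is $\mathbb{C}[t,t^{-1}]$ with $ht^i=\lambda(i)t^i$, $xt^i=(\lambda(i+1)+\dot z)t^{i+1}$, $yt^i=t^{i-1}$. These are $\mathcal{H}(f)$-modules, and when $|\lambda|=m\ne0$ and $a\in\mathbb{C}^*$, $\mathbb{C}[t,t^{-1}](t^m-a)$ is a submodule of each; set $A'_{\mathcal{H}(f)}(\lambda,\dot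 z,a)=A_{\mathcal{H}(f)}(\lambda,\dot z)/\mathbb{C}[t,t^{-1}](t^m-a)$ and $B'_{\mathcal{H}(f)}(\lambda,\dot z,a)=B_{\mathcal{H}(f)}(\lambda,\dot z)/\mathbb{C}[t,t^{-1}](t^m-a)$. *)

theory Defs
  imports "HOL-Computational_Algebra.Polynomial" "HOL-Library.Poly_Mapping"
begin

text \<open>Laurent polynomials C[t,t^-1] are modelled as
  finitely supported int-to-complex maps (coefficient of t^i at key i); multiplication is convolution.\<close>

type_synonym laurent = "int \<Rightarrow>\<^sub>0 complex"

definition tpow :: "int \<Rightarrow> laurent" where
  "tpow i = Poly_Mapping.single i 1"

definition cst :: "complex \<Rightarrow> laurent" where
  "cst c = Poly_Mapping.single 0 c"

definition S_f :: "complex poly \<Rightarrow> (int \<Rightarrow> complex) set" where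
  "S_f f = {lam. \<forall>i. poly f (lam i) = lam (i + 1)}"

definition period_group :: "(int \<Rightarrow> complex) \<Rightarrow> int set" where
  "period_group lam = {k. \<forall>i. lam (i + k) = lam i}"

definition lam_abs :: "(int \<Rightarrow> complex) \<Rightarrow> nat" where
  "lam_abs lam = (THE m. period_group lam = {int m * j | j. True})"

definition shift_op :: "int \<Rightarrow> (int \<Rightarrow> complex) \<Rightarrow> laurent \<Rightarrow> laurent" where
  "shift_op d c p = (\<Sum>i\<in>Poly_Mapping.keys p. Poly_Mapping.single (i + d) (c i * Poly_Mapping.lookup p i))"

definition A_h :: "(int \<Rightarrow> complex) \<Rightarrow> laurent \<Rightarrow> laurent" where
  "A_h lam = shift_op 0 lam"
definition A_x :: "laurent \<Rightarrow> laurent" where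
  "A_x = shift_op 1 (\<lambda>_. 1)"
definition A_y :: "(int \<Rightarrow> complex) \<Rightarrow> complex \<Rightarrow> laurent \<Rightarrow> laurent" where
  "A_y lam z = shift_op (-1) (\<lambda>i. lam i + z)"

definition B_h :: "(int \<Rightarrow> complex) \<Rightarrow> laurent \<Rightarrow> laurent" where
  "B_h lam = shift_op 0 lam"
definition B_x :: "(int \<Rightarrow> complex) \<Rightarrow> complex \<Rightarrow> laurent \<Rightarrow> laurent" where
  "B_x lam z = shift_op 1 (\<lambda>i. lam (i + 1) + z)"
definition B_y :: "laurent \<Rightarrow> laurent" where
  "B_y = shift_op (-1) (\<lambda>_. 1)"

text \<open>A submodule of a module over H(f) (generated by x,y,h) given by the actions
  of the generators: a complex subspace stable under the three generators.\<close>
definition is_submodule ::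
  "(laurent \<Rightarrow> laurent) \<Rightarrow> (laurent \<Rightarrow> laurent) \<Rightarrow> (laurent \<Rightarrow> laurent) \<Rightarrow> laurent set \<Rightarrow> bool" where
  "is_submodule X Y H W \<longleftrightarrow>
     0 \<in> W \<and> (\<forall>p\<in>W. \<forall>q\<in>W. p + q \<in> W) \<and> (\<forall>c. \<forall>p\<in>W. cst c * p \<in> W) \<and>
     (\<forall>p\<in>W. X p \<in> W) \<and> (\<forall>p\<in>W. Y p \<in> W) \<and> (\<forall>p\<in>W. H p \<in> W)"

text \<open>The quotient module M/N (M = all Laurent polynomials) is simple: N is a submodule,
  M/N is nonzero, and by the correspondence theorem every submodule of M/N is the image
  of a submodule W with N \<subseteq> W, which must be N or M.\<close>
definition simple_quotient ::
  "(laurent \<Rightarrow> laurent) \<Rightarrow> (laurent \<Rightarrow> laurent) \<Rightarrow> (laurent \<Rightarrow> laurent) \<Rightarrow> laurent set \<Rightarrow> bool" where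
  "simple_quotient X Y H N \<longleftrightarrow>
     is_submodule X Y H N \<and> N \<noteq> UNIV \<and>
     (\<forall>W. is_submodule X Y H W \<and> N \<subseteq> W \<longrightarrow> W = N \<or> W = UNIV)"

text \<open>The quotient vector space C[t,t^-1]/N is m-dimensional, witnessed by the classes of
  t^0, ..., t^(m-1) forming a basis.\<close>
definition quotient_dim_basis :: "laurent set \<Rightarrow> nat \<Rightarrow> bool" where
  "quotient_dim_basis N m \<longleftrightarrow>
     (\<forall>p. \<exists>c. p - (\<Sum>i<m. cst (c i) * tpow (int i)) \<in> N) \<and>
     (\<forall>c. (\<Sum>i<m. cst (c i) * tpow (int i)) \<in> N \<longrightarrow> (\<forall>i<m. c i = 0))"

definition ideal_gen :: "nat \<Rightarrow> complex \<Rightarrow> laurent set" where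
  "ideal_gen m a = {q * (tpow (int m) - cst a) | q. True}"

end

theory Submission
  imports Defs
begin

text \<open>Modulo t^m - a the monomial t^(k + m s) is congruent to a^s t^k, so the classes of
  1, t, ..., t^(m-1) span the quotient; they are independent because a nonzero multiple of
  t^m - a has coefficients at two exponents at least m apart. Since lam has exact period m and
  lam(i+1) = f(lam(i)), it is injective on {0, ..., m-1}, so h acts diagonally with distinct
  eigenvalues on the span of these classes. Hence a submodule strictly containing
  C[t,t^-1](t^m - a) contains some monomial t^i, then all t^(i + m s), and finally all monomials,
  because x (for A) resp. y (for B) acts as the plain shift t^k \<mapsto> t^(k+1) resp. t^(k-1).\<close>

abbreviation tcoeff :: "laurent \<Rightarrow> int \<Rightarrow> complex" where
  "tcoeff \<equiv> Poly_Mapping.lookup"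

lemma tcoeff_single_mult: "tcoeff (Poly_Mapping.single j v * p) k = v * tcoeff p (k - j)"
proof -
  have "\<And>i. (k = j + i) = (i = k - j)" by auto
  then show ?thesis by (simp add: lookup_mult lookup_single when_mult)
qed

lemma tcoeff_tpow_mult: "tcoeff (tpow j * p) k = tcoeff p (k - j)"
  by (simp add: tpow_def tcoeff_single_mult)

lemma tcoeff_cst_mult: "tcoeff (cst c * p) k = c * tcoeff p k"
  by (simp add: cst_def tcoeff_single_mult)

lemma tcoeff_tpow: "tcoeff (tpow j) k = (if k = j then 1 else 0)"
  by (simp add: tpow_def lookup_single when_def)

lemma tpow_add: "tpow (i + j) = tpow i * tpow j"
  by (simp add: tpow_def mult_single)

lemma tpow_mult_nat: "tpow (i * int n) = tpow i ^ n"
  by (induction n) (simp_all add: algebra_simps tpow_add, simp add: tpow_def)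

lemma cst_mult: "cst (c * d) = cst c * cst d"
  by (simp add: cst_def mult_single)

lemma cst_power: "cst (c ^ n) = cst c ^ n"
  by (induction n) (simp_all add: cst_mult, simp add: cst_def)

lemma tcoeff_shift_op: "tcoeff (shift_op d c p) k = c (k - d) * tcoeff p (k - d)"
proof -
  have "tcoeff (shift_op d c p) k
      = (\<Sum>i\<in>Poly_Mapping.keys p. if i = k - d then c i * tcoeff p i else 0)"
    unfolding shift_op_def lookup_sum lookup_single when_def by (intro sum.cong) auto
  also have "\<dots> = c (k - d) * tcoeff p (k - d)"
    by (cases "k - d \<in> Poly_Mapping.keys p") (auto simp: in_keys_iff)
  finally show ?thesis .
qed

lemma shift_op_tpow: "shift_op d c (tpow k) = cst (c k) * tpow (k + d)"
  by (rule poly_mapping_eqI) (simp add: tcoeff_shift_op tcoeff_cst_mult tcoeff_tpow)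

lemma laurent_expansion: "p = (\<Sum>k\<in>Poly_Mapping.keys p. cst (tcoeff p k) * tpow k)"
proof (rule poly_mapping_eqI)
  fix j
  have "tcoeff (\<Sum>k\<in>Poly_Mapping.keys p. cst (tcoeff p k) * tpow k) j
      = (\<Sum>k\<in>Poly_Mapping.keys p. if k = j then tcoeff p j else 0)"
    unfolding lookup_sum by (intro sum.cong) (auto simp: tcoeff_cst_mult tcoeff_tpow)
  then show "tcoeff p j = tcoeff (\<Sum>k\<in>Poly_Mapping.keys p. cst (tcoeff p k) * tpow k) j"
    by (auto simp: in_keys_iff)
qed

lemma tcoeff_low_sum:
  "tcoeff (\<Sum>i<m. cst (c i) * tpow (int i)) k = (if 0 \<le> k \<and> k < int m then c (nat k) else 0)"
proof -
  have "tcoeff (\<Sum>i<m. cst (c i) * tpow (int i)) k = (\<Sum>i<m. if i = nat k \<and> 0 \<le> k then c i else 0)"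
    unfolding lookup_sum by (intro sum.cong) (auto simp: tcoeff_cst_mult tcoeff_tpow)
  then show ?thesis
    by (cases "0 \<le> k") auto
qed

lemma int_subgroup_eq_multiples:
  fixes S :: "int set"
  assumes "0 \<in> S" and diff: "\<And>x y. x \<in> S \<Longrightarrow> y \<in> S \<Longrightarrow> x - y \<in> S"
  shows "\<exists>M::nat. S = {int M * j | j. True}"
proof (cases "S \<subseteq> {0}")
  case True
  then show ?thesis using \<open>0 \<in> S\<close> by (intro exI[of _ 0]) auto
next
  case False
  have neg: "- x \<in> S" if "x \<in> S" for x
    using diff[OF \<open>0 \<in> S\<close> that] by simp
  from False obtain x where "x \<in> S" "x \<noteq> 0" by auto
  then have ex: "\<exists>n::nat. 0 < n \<and> int n \<in> S"
    using neg[of x] by (intro exI[of _ "nat \<bar>x\<bar>"]) (auto simp: abs_if)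
  define d where "d = (LEAST n::nat. 0 < n \<and> int n \<in> S)"
  have d: "0 < d" "int d \<in> S"
    using LeastI_ex[OF ex] unfolding d_def by auto
  have d_least: "d \<le> n" if "0 < n" "int n \<in> S" for n
    unfolding d_def by (rule Least_le) (use that in simp)
  have multiples: "int d * j \<in> S" for j
  proof (induction j rule: int_induct[where k = 0])
    case (step1 i)
    then show ?case using diff[OF step1(2) neg[OF d(2)]] by (simp add: algebra_simps)
  next
    case (step2 i)
    then show ?case using diff[OF step2(2) d(2)] by (simp add: algebra_simps)
  qed (simp add: \<open>0 \<in> S\<close>)
  have "int d dvd y" if "y \<in> S" for y
  proof -
    have "y mod int d = y - int d * (y div int d)"
      by (simp add: minus_div_mult_eq_mod[symmetric] algebra_simps)
    then have "y mod int d \<in> S"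
      using diff[OF that multiples] by simp
    moreover have "0 \<le> y mod int d" "y mod int d < int d"
      using d(1) by simp_all
    ultimately have "y mod int d = 0"
      using d_least[of "nat (y mod int d)"] by (cases "y mod int d = 0") auto
    then show ?thesis by presburger
  qed
  then have "S = {int d * j | j. True}"
    using multiples by (auto elim!: dvdE)
  then show ?thesis by blast
qed

lemma period_group_eq_multiples:
  "period_group lam = {int (lam_abs lam) * j | j. True}"
proof -
  have "\<exists>M::nat. period_group lam = {int M * j | j. True}"
  proof (rule int_subgroup_eq_multiples)
    show "0 \<in> period_group lam"
      by (simp add: period_group_def)
    show "x - y \<in> period_group lam" if "x \<in> period_group lam" "y \<in> period_group lam" for x y
    proof -
      have x: "lam (k + x) = lam k" and y: "lam (k + y) = lam k" for k
        using that by (simp_all add: period_group_def)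
      have "lam (i + (x - y)) = lam (i + (x - y) + y)" for i
        by (rule y[symmetric])
      then have "lam (i + (x - y)) = lam i" for i
        using x[of i] by simp
      then show ?thesis by (simp add: period_group_def)
    qed
  qed
  then obtain M where M: "period_group lam = {int M * j | j. True}" by blast
  have unique: "M' = M" if "period_group lam = {int M' * j | j. True}" for M'
  proof -
    have "int M \<in> period_group lam"
      unfolding M by (intro CollectI exI[of _ 1]) simp
    then have "int M' dvd int M"
      unfolding that by (auto simp: dvd_def)
    have "int M' \<in> period_group lam"
      unfolding that by (intro CollectI exI[of _ 1]) simp
    then have "int M dvd int M'"
      unfolding M by (auto simp: dvd_def)
    with \<open>int M' dvd int M\<close> show ?thesis
      by (simp add: dvd_antisym)
  qed
  have "lam_abs lam = M"
    unfolding lam_abs_def by (rule the_equality) (rule M, rule unique)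
  then show ?thesis using M by simp
qed

lemma lam_abs_periodic: "lam (i + int (lam_abs lam) * s) = lam i"
  using period_group_eq_multiples[of lam] by (auto simp: period_group_def set_eq_iff)

lemma S_f_inj_on_period:
  assumes "lam \<in> S_f f"
  shows "inj_on lam {0..<int (lam_abs lam)}"
proof (rule inj_onI)
  let ?m = "int (lam_abs lam)"
  fix i j assume i: "i \<in> {0..<?m}" and j: "j \<in> {0..<?m}" and eq: "lam i = lam j"
  \<comment> \<open>Equal values stay equal along the orbit of f, so j - i is a period.\<close>
  have forward: "lam (i + int n) = lam (j + int n)" for n
  proof (induction n)
    case (Suc n)
    have "lam (i + int (Suc n)) = poly f (lam (i + int n))"
      using assms by (simp add: S_f_def algebra_simps)
    also have "\<dots> = lam (j + int (Suc n))"
      using assms Suc by (simp add: S_f_def algebra_simps)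
    finally show ?case .
  qed (simp add: eq)
  have "lam (n + (j - i)) = lam n" for n
  proof -
    define s where "s = (n - i) div ?m"
    define k where "k = (n - i) mod ?m"
    have "0 \<le> k" using i unfolding k_def by simp
    have n: "n = i + k + ?m * s"
      unfolding k_def s_def by simp
    have "lam (n + (j - i)) = lam (j + int (nat k))"
      using n lam_abs_periodic[of lam "j + k" s] \<open>0 \<le> k\<close> by (simp add: algebra_simps)
    also have "\<dots> = lam n"
      using n forward[of "nat k"] lam_abs_periodic[of lam "i + k" s] \<open>0 \<le> k\<close> by simp
    finally show ?thesis .
  qed
  then have "j - i \<in> period_group lam"
    by (simp add: period_group_def)
  then obtain s where "j - i = ?m * s"
    using period_group_eq_multiples[of lam] by blast
  have "0 < ?m" using i by simp
  from i j have "0 \<le> i" "i < ?m" "0 \<le> j" "j < ?m" by simp_all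
  then have "?m * s < ?m * 1" "?m * (-1) < ?m * s"
    using \<open>j - i = ?m * s\<close> by linarith+
  then have "s < 1" "-1 < s"
    by (simp_all only: mult_less_cancel_left_pos[OF \<open>0 < ?m\<close>])
  then have "s = 0" by simp
  then show "i = j" using \<open>j - i = ?m * s\<close> by simp
qed

lemma cst_sum: "cst (sum f A) = (\<Sum>x\<in>A. cst (f x))"
  by (induction A rule: infinite_finite_induct) (simp_all add: cst_def single_add)

lemma ideal_gen_iff_dvd: "p \<in> ideal_gen m a \<longleftrightarrow> tpow (int m) - cst a dvd p"
  by (auto simp: ideal_gen_def dvd_def mult.commute)

lemma tpow_congruent_nat:
  "tpow (int m) - cst a dvd tpow (k + int m * int n) - cst (a ^ n) * tpow k"
proof -
  have "tpow (k + int m * int n) - cst (a ^ n) * tpow k = tpow k * (tpow (int m) ^ n - cst a ^ n)"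
    by (simp add: tpow_add tpow_mult_nat cst_power algebra_simps)
  moreover have "tpow (int m) - cst a dvd tpow (int m) ^ n - cst a ^ n"
    by (simp add: power_diff_sumr2)
  ultimately show ?thesis
    by (simp add: dvd_mult)
qed

lemma tpow_congruent:
  assumes "a \<noteq> 0"
  shows "tpow (int m) - cst a dvd tpow (k + int m * s) - cst (a powi s) * tpow k"
proof (cases "0 \<le> s")
  case True
  then show ?thesis
    using tpow_congruent_nat[of m a k "nat s"] by (simp add: power_int_def)
next
  case False
  define n where "n = nat (- s)"
  have "a powi s * a ^ n = 1"
    using assms False unfolding n_def power_int_def by (simp flip: power_mult_distrib)
  then have "tpow (k + int m * s) - cst (a powi s) * tpow k
      = - cst (a powi s) * (tpow k - cst (a ^ n) * tpow (k + int m * s))"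
    by (simp add: algebra_simps flip: cst_mult, simp add: cst_def)
  moreover have "tpow (int m) - cst a dvd tpow k - cst (a ^ n) * tpow (k + int m * s)"
    using tpow_congruent_nat[of m a "k + int m * s" n] False unfolding n_def
    by (simp add: algebra_simps)
  ultimately show ?thesis
    by (simp add: dvd_mult)
qed

lemma low_sum_spans_modulo:
  assumes "a \<noteq> 0" "m \<noteq> 0"
  shows "\<exists>c. tpow (int m) - cst a dvd p - (\<Sum>i<m. cst (c i) * tpow (int i))"
proof -
  let ?K = "Poly_Mapping.keys p"
  define w where "w k = tcoeff p k * a powi (k div int m)" for k
  define c where "c i = (\<Sum>k | k \<in> ?K \<and> nat (k mod int m) = i. w k)" for i
  have "(\<Sum>i<m. cst (c i) * tpow (int i))
      = (\<Sum>i<m. \<Sum>k | k \<in> ?K \<and> nat (k mod int m) = i. cst (w k) * tpow (k mod int m))"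
    unfolding c_def cst_sum sum_distrib_right using assms(2) by (intro sum.cong refl) auto
  also have "\<dots> = (\<Sum>k\<in>?K. cst (w k) * tpow (k mod int m))"
    using assms(2) by (intro sum.group) (auto simp: nat_less_iff)
  finally have "p - (\<Sum>i<m. cst (c i) * tpow (int i))
      = (\<Sum>k\<in>?K. cst (tcoeff p k) * (tpow k - cst (a powi (k div int m)) * tpow (k mod int m)))"
    by (subst (1) laurent_expansion)
      (simp add: w_def cst_mult algebra_simps flip: sum_subtractf)
  also have "tpow (int m) - cst a dvd \<dots>"
  proof (intro dvd_sum dvd_mult)
    show "tpow (int m) - cst a dvd tpow k - cst (a powi (k div int m)) * tpow (k mod int m)" for k
      using tpow_congruent[OF assms(1), of m "k mod int m" "k div int m"] by simp
  qed
  finally show ?thesis by blast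
qed

lemma tcoeff_mult_gen:
  "tcoeff (q * (tpow (int m) - cst a)) k = tcoeff q (k - int m) - a * tcoeff q k"
  unfolding mult.commute[of q] left_diff_distrib lookup_minus tcoeff_tpow_mult tcoeff_cst_mult ..

lemma multiple_of_gen_support_wide:
  assumes "a \<noteq> 0" "m \<noteq> 0" "tpow (int m) - cst a dvd p" "p \<noteq> 0"
  shows "\<exists>i j. tcoeff p i \<noteq> 0 \<and> tcoeff p j \<noteq> 0 \<and> i + int m \<le> j"
proof -
  obtain q where p: "p = q * (tpow (int m) - cst a)"
    using assms(3) by (auto simp: dvd_def mult.commute)
  let ?K = "Poly_Mapping.keys q"
  have "?K \<noteq> {}" using assms(4) p by auto
  define lo where "lo = Min ?K"
  define hi where "hi = Max ?K"
  have "lo \<in> ?K" "hi \<in> ?K" "lo \<le> hi"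
    using \<open>?K \<noteq> {}\<close> unfolding lo_def hi_def by auto
  have "lo - int m \<notin> ?K"
  proof
    assume "lo - int m \<in> ?K"
    then have "lo \<le> lo - int m" unfolding lo_def by simp
    then show False using assms(2) by simp
  qed
  have "hi + int m \<notin> ?K"
  proof
    assume "hi + int m \<in> ?K"
    then have "hi + int m \<le> hi"
      unfolding hi_def using Max_ge[OF finite_keys] by blast
    then show False using assms(2) by simp
  qed
  \<comment> \<open>The lowest coefficient of q survives at lo (times -a), the highest at hi + m.\<close>
  with \<open>lo - int m \<notin> ?K\<close>
  have "tcoeff p lo = - a * tcoeff q lo" "tcoeff p (hi + int m) = tcoeff q hi"
    unfolding p tcoeff_mult_gen by (simp_all add: in_keys_iff)
  then show ?thesis
    using assms(1) \<open>lo \<in> ?K\<close> \<open>hi \<in> ?K\<close> \<open>lo \<le> hi\<close>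
    by (intro exI[of _ lo] exI[of _ "hi + int m"]) (auto simp: in_keys_iff)
qed

lemma low_sum_dvd_imp_zero:
  assumes "a \<noteq> 0" "m \<noteq> 0"
    and "tpow (int m) - cst a dvd (\<Sum>i<m. cst (c i) * tpow (int i))"
  shows "\<forall>i<m. c i = 0"
proof -
  have "(\<Sum>i<m. cst (c i) * tpow (int i)) = 0"
  proof (rule ccontr)
    assume "(\<Sum>i<m. cst (c i) * tpow (int i)) \<noteq> 0"
    then obtain i j where "tcoeff (\<Sum>i<m. cst (c i) * tpow (int i)) i \<noteq> 0"
      "tcoeff (\<Sum>i<m. cst (c i) * tpow (int i)) j \<noteq> 0" "i + int m \<le> j"
      using multiple_of_gen_support_wide[OF assms] by blast
    then show False by (auto simp: tcoeff_low_sum split: if_splits)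
  qed
  show ?thesis
  proof (intro allI impI)
    fix i assume "i < m"
    then show "c i = 0"
      using tcoeff_low_sum[of c m "int i"] \<open>(\<Sum>i<m. cst (c i) * tpow (int i)) = 0\<close> by simp
  qed
qed

lemma quotient_dim_basis_ideal_gen:
  assumes "a \<noteq> 0" "m \<noteq> 0"
  shows "quotient_dim_basis (ideal_gen m a) m"
  unfolding quotient_dim_basis_def ideal_gen_iff_dvd
  using low_sum_spans_modulo[OF assms] low_sum_dvd_imp_zero[OF assms] by blast

lemma tpow_notin_ideal_gen:
  assumes "a \<noteq> 0" "m \<noteq> 0"
  shows "tpow k \<notin> ideal_gen m a"
proof
  assume "tpow k \<in> ideal_gen m a"
  moreover have "tpow k \<noteq> 0"
    using tcoeff_tpow[of k k] by auto
  ultimately obtain i j where "tcoeff (tpow k) i \<noteq> 0" "tcoeff (tpow k) j \<noteq> 0" "i + int m \<le> j"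
    using multiple_of_gen_support_wide[OF assms] unfolding ideal_gen_iff_dvd by blast
  then show False
    using assms(2) by (simp add: tcoeff_tpow split: if_splits)
qed

lemma shift_op_mult_gen:
  assumes "\<And>i. c (i + int m) = c i"
  shows "shift_op d c (q * (tpow (int m) - cst a)) = shift_op d c q * (tpow (int m) - cst a)"
proof (rule poly_mapping_eqI)
  fix k
  have "c (k - int m - d) = c (k - d)"
    using assms[of "k - int m - d"] by simp
  then show "tcoeff (shift_op d c (q * (tpow (int m) - cst a))) k
      = tcoeff (shift_op d c q * (tpow (int m) - cst a)) k"
    unfolding tcoeff_shift_op tcoeff_mult_gen by (simp add: algebra_simps)
qed

lemma is_submodule_ideal_gen:
  assumes "\<And>i. c1 (i + int m) = c1 i" "\<And>i. c2 (i + int m) = c2 i" "\<And>i. c3 (i + int m) = c3 i"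
  shows "is_submodule (shift_op d1 c1) (shift_op d2 c2) (shift_op d3 c3) (ideal_gen m a)"
proof -
  have shift_closed: "shift_op d c p \<in> ideal_gen m a"
    if "\<And>i. c (i + int m) = c i" "p \<in> ideal_gen m a" for d c p
    using that shift_op_mult_gen[of c m d _ a] by (auto simp: ideal_gen_def)
  show ?thesis
    unfolding is_submodule_def
    by (intro conjI ballI allI shift_closed assms) (simp_all add: ideal_gen_iff_dvd dvd_mult)
qed

lemma
  assumes "is_submodule X Y H W"
  shows submodule_zero: "0 \<in> W"
    and submodule_add: "p \<in> W \<Longrightarrow> q \<in> W \<Longrightarrow> p + q \<in> W"
    and submodule_smult: "p \<in> W \<Longrightarrow> cst c * p \<in> W"
    and submodule_X: "p \<in> W \<Longrightarrow> X p \<in> W"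
    and submodule_Y: "p \<in> W \<Longrightarrow> Y p \<in> W"
    and submodule_H: "p \<in> W \<Longrightarrow> H p \<in> W"
  using assms unfolding is_submodule_def by blast+

lemma submodule_diff:
  assumes "is_submodule X Y H W" "p \<in> W" "q \<in> W"
  shows "p - q \<in> W"
proof -
  have "p + cst (-1) * q \<in> W"
    using assms by (intro submodule_add submodule_smult)
  moreover have "cst (-1) * q = - q"
    by (rule poly_mapping_eqI) (simp add: tcoeff_cst_mult)
  ultimately show ?thesis by simp
qed

lemma submodule_sum:
  assumes "is_submodule X Y H W" "finite A" "\<And>x. x \<in> A \<Longrightarrow> f x \<in> W"
  shows "sum f A \<in> W"
  using assms(2,3) by (induction A rule: finite_induct)
    (simp_all add: submodule_zero[OF assms(1)] submodule_add[OF assms(1)])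

lemma submodule_eq_UNIV_if_tpow:
  assumes "is_submodule X Y H W" "\<And>k. tpow k \<in> W"
  shows "W = UNIV"
proof -
  have "p \<in> W" for p
  proof -
    have "(\<Sum>k\<in>Poly_Mapping.keys p. cst (tcoeff p k) * tpow k) \<in> W"
      using assms by (intro submodule_sum submodule_smult) auto
    then show ?thesis by (simp only: laurent_expansion[symmetric])
  qed
  then show ?thesis by blast
qed

lemma tpow_eq_smult_if_keys_singleton:
  assumes "Poly_Mapping.keys r = {i}"
  shows "tpow i = cst (inverse (tcoeff r i)) * r"
proof -
  define c where "c = tcoeff r i"
  have "i \<in> Poly_Mapping.keys r" using assms by simp
  then have "c \<noteq> 0" by (simp add: c_def in_keys_iff)
  have "r = (\<Sum>k\<in>Poly_Mapping.keys r. cst (tcoeff r k) * tpow k)"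
    by (rule laurent_expansion)
  also have "\<dots> = cst c * tpow i"
    using assms by (simp add: c_def)
  finally have "cst (inverse c) * r = cst (inverse c * c) * tpow i"
    by (simp add: cst_mult mult.assoc)
  also have "\<dots> = tpow i"
    using \<open>c \<noteq> 0\<close> by (simp add: cst_def)
  finally show ?thesis by (simp add: c_def)
qed

lemma submodule_contains_tpow:
  assumes sub: "is_submodule X Y (shift_op 0 lam) W"
  shows "r \<in> W \<Longrightarrow> r \<noteq> 0 \<Longrightarrow> inj_on lam (Poly_Mapping.keys r) \<Longrightarrow> \<exists>i. tpow i \<in> W"
proof (induction "card (Poly_Mapping.keys r)" arbitrary: r rule: less_induct)
  case less
  from \<open>r \<noteq> 0\<close> obtain i where i: "i \<in> Poly_Mapping.keys r"
    by (metis in_keys_iff lookup_zero poly_mapping_eqI)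
  show ?case
  proof (cases "Poly_Mapping.keys r = {i}")
    case True
    then have "tpow i \<in> W"
      using submodule_smult[OF sub \<open>r \<in> W\<close>] by (simp add: tpow_eq_smult_if_keys_singleton[OF True])
    then show ?thesis ..
  next
    case False
    with i obtain j where j: "j \<in> Poly_Mapping.keys r" "j \<noteq> i" by auto
    \<comment> \<open>h - lam j kills the coefficient at j but, as lam separates the support, not the one at i.\<close>
    define r' where "r' = shift_op 0 lam r - cst (lam j) * r"
    have coeff: "tcoeff r' k = (lam k - lam j) * tcoeff r k" for k
      unfolding r'_def lookup_minus tcoeff_shift_op tcoeff_cst_mult by (simp add: algebra_simps)
    have "r' \<in> W"
      unfolding r'_def using submodule_H[OF sub \<open>r \<in> W\<close>] submodule_smult[OF sub \<open>r \<in> W\<close>]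
      by (rule submodule_diff[OF sub])
    have "lam i \<noteq> lam j"
      using inj_onD[OF \<open>inj_on lam _\<close> _ i j(1)] j(2) by blast
    then have "i \<in> Poly_Mapping.keys r'"
      using i by (simp add: in_keys_iff coeff)
    have keys: "Poly_Mapping.keys r' \<subseteq> Poly_Mapping.keys r - {j}"
      by (auto simp: in_keys_iff coeff)
    then have "card (Poly_Mapping.keys r') < card (Poly_Mapping.keys r)"
      using j(1) by (intro psubset_card_mono) auto
    moreover have "inj_on lam (Poly_Mapping.keys r')"
      using \<open>inj_on lam _\<close> by (rule inj_on_subset) (use keys in blast)
    moreover have "r' \<noteq> 0"
      using \<open>i \<in> Poly_Mapping.keys r'\<close> by auto
    ultimately show ?thesis
      using less.hyps[of r'] \<open>r' \<in> W\<close> by blast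
  qed
qed

lemma int_set_eq_UNIV_if_succ_closed:
  fixes S :: "int set"
  assumes "i \<in> S" "m \<noteq> 0"
    and period: "\<And>k s. k \<in> S \<Longrightarrow> k + int m * s \<in> S"
    and succ: "\<And>k. k \<in> S \<Longrightarrow> k + 1 \<in> S"
  shows "S = UNIV"
proof -
  have up: "k + int n \<in> S" if "k \<in> S" for k n
  proof (induction n)
    case (Suc n)
    then show ?case using succ[of "k + int n"] by (simp add: algebra_simps)
  qed (simp add: that)
  have "K \<in> S" for K
  proof -
    define k where "k = i + int m * ((K - i) div int m)"
    have "k \<le> K"
      unfolding k_def using assms(2) minus_mod_eq_mult_div[of "K - i" "int m"] pos_mod_sign[of "int m" "K - i"]
      by linarith
    then have "K = k + int (nat (K - k))" by simp
    also have "\<dots> \<in> S"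
      unfolding k_def by (intro up period assms(1))
    finally show ?thesis .
  qed
  then show ?thesis by blast
qed

lemma int_set_eq_UNIV_if_pred_closed:
  fixes S :: "int set"
  assumes "i \<in> S" "m \<noteq> 0"
    and period: "\<And>k s. k \<in> S \<Longrightarrow> k + int m * s \<in> S"
    and pred: "\<And>k. k \<in> S \<Longrightarrow> k - 1 \<in> S"
  shows "S = UNIV"
proof (rule int_set_eq_UNIV_if_succ_closed[OF assms(1-3)])
  have down: "k - int n \<in> S" if "k \<in> S" for k n
  proof (induction n)
    case (Suc n)
    then show ?case using pred[of "k - int n"] by (simp add: algebra_simps)
  qed (simp add: that)
  fix k assume "k \<in> S"
  have "k + 1 = (k + int m * 1) - int (m - 1)"
    using assms(2) by simp
  also have "\<dots> \<in> S"
    using \<open>k \<in> S\<close> by (intro down period)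
  finally show "k + 1 \<in> S" .
qed

lemma submodule_eq_UNIV_if_shift:
  assumes sub: "is_submodule X Y H W" and "ideal_gen m a \<subseteq> W" "a \<noteq> 0" "m \<noteq> 0" "tpow i \<in> W"
    and shift: "(\<forall>k. X (tpow k) = tpow (k + 1)) \<or> (\<forall>k. Y (tpow k) = tpow (k - 1))"
  shows "W = UNIV"
proof (rule submodule_eq_UNIV_if_tpow[OF sub])
  let ?S = "{k. tpow k \<in> W}"
  have period: "k + int m * s \<in> ?S" if "k \<in> ?S" for k s
  proof -
    have "tpow (k + int m * s) - cst (a powi s) * tpow k \<in> W"
      using tpow_congruent[OF \<open>a \<noteq> 0\<close>] \<open>ideal_gen m a \<subseteq> W\<close> by (auto simp: ideal_gen_iff_dvd)
    moreover have "cst (a powi s) * tpow k \<in> W"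
      using that by (simp add: submodule_smult[OF sub])
    ultimately show ?thesis
      using submodule_add[OF sub] by fastforce
  qed
  from shift have "?S = UNIV"
  proof
    assume "\<forall>k. X (tpow k) = tpow (k + 1)"
    then have "k + 1 \<in> ?S" if "k \<in> ?S" for k
      using submodule_X[OF sub, of "tpow k"] that by simp
    then show ?thesis
      using \<open>tpow i \<in> W\<close> \<open>m \<noteq> 0\<close> period by (intro int_set_eq_UNIV_if_succ_closed[of i _ m]) auto
  next
    assume "\<forall>k. Y (tpow k) = tpow (k - 1)"
    then have "k - 1 \<in> ?S" if "k \<in> ?S" for k
      using submodule_Y[OF sub, of "tpow k"] that by simp
    then show ?thesis
      using \<open>tpow i \<in> W\<close> \<open>m \<noteq> 0\<close> period by (intro int_set_eq_UNIV_if_pred_closed[of i _ m]) auto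
  qed
  then show "tpow k \<in> W" for k by blast
qed

lemma simple_quotient_ideal_gen:
  assumes "a \<noteq> 0" "m \<noteq> 0"
    and sub: "is_submodule X Y (shift_op 0 lam) (ideal_gen m a)"
    and inj: "inj_on lam {0..<int m}"
    and shift: "(\<forall>k. X (tpow k) = tpow (k + 1)) \<or> (\<forall>k. Y (tpow k) = tpow (k - 1))"
  shows "simple_quotient X Y (shift_op 0 lam) (ideal_gen m a)"
  unfolding simple_quotient_def
proof (intro conjI allI impI sub)
  show "ideal_gen m a \<noteq> UNIV"
    using tpow_notin_ideal_gen[OF assms(1,2)] by blast
  fix W assume "is_submodule X Y (shift_op 0 lam) W \<and> ideal_gen m a \<subseteq> W"
  then have subW: "is_submodule X Y (shift_op 0 lam) W" and N: "ideal_gen m a \<subseteq> W" by auto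
  show "W = ideal_gen m a \<or> W = UNIV"
  proof (cases "W = ideal_gen m a")
    case False
    then obtain p where "p \<in> W" "p \<notin> ideal_gen m a" using N by blast
    obtain c where c: "p - (\<Sum>i<m. cst (c i) * tpow (int i)) \<in> ideal_gen m a"
      using low_sum_spans_modulo[OF assms(1,2)] by (auto simp: ideal_gen_iff_dvd)
    define r where "r = (\<Sum>i<m. cst (c i) * tpow (int i))"
    have "r \<in> W"
      using submodule_diff[OF subW \<open>p \<in> W\<close>, of "p - r"] c N unfolding r_def by auto
    moreover have "r \<noteq> 0"
      using c \<open>p \<notin> ideal_gen m a\<close> unfolding r_def by auto
    moreover have "inj_on lam (Poly_Mapping.keys r)"
      using inj by (rule inj_on_subset) (auto simp: r_def in_keys_iff tcoeff_low_sum split: if_splits)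
    ultimately obtain i where "tpow i \<in> W"
      using submodule_contains_tpow[OF subW] by blast
    then show ?thesis
      using submodule_eq_UNIV_if_shift[OF subW N assms(1,2) _ shift] by blast
  qed simp
qed

theorem lemma8:
  fixes f :: "complex poly" and lam :: "int \<Rightarrow> complex" and m :: nat
    and z a :: complex
  assumes "lam \<in> S_f f"
    and "lam_abs lam = m" and "m \<noteq> 0"
    and "a \<noteq> 0"
  shows "quotient_dim_basis (ideal_gen m a) m
       \<and> simple_quotient A_x (A_y lam z) (A_h lam) (ideal_gen m a)
       \<and> simple_quotient (B_x lam z) B_y (B_h lam) (ideal_gen m a)"
proof -
  have per: "lam (i + int m) = lam i" for i
    using lam_abs_periodic[of lam i 1] assms(2) by simp
  have per_succ: "lam (i + int m + 1) = lam (i + 1)" for i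
    using per[of "i + 1"] by (simp add: add_ac)
  have inj: "inj_on lam {0..<int m}"
    using S_f_inj_on_period[OF assms(1)] assms(2) by simp
  have "simple_quotient A_x (A_y lam z) (A_h lam) (ideal_gen m a)"
    unfolding A_x_def A_y_def A_h_def
    by (intro simple_quotient_ideal_gen is_submodule_ideal_gen assms(3,4) inj disjI1 allI)
      (simp_all add: per shift_op_tpow cst_def)
  moreover have "simple_quotient (B_x lam z) B_y (B_h lam) (ideal_gen m a)"
    unfolding B_x_def B_y_def B_h_def
    by (intro simple_quotient_ideal_gen is_submodule_ideal_gen assms(3,4) inj disjI2 allI)
      (simp_all add: per per_succ shift_op_tpow cst_def)
  ultimately show ?thesis
    using quotient_dim_basis_ideal_gen[OF assms(4,3)] by blast
qed

end
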